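(* Let $p\ge5$, let $\lambda$ be the leftmost assignment and $\alpha$ an assignment on the white metallic tree; let $\lambda_\ell(\nu)$, $\alpha_\ell(\nu)$ be the leftmost son of $\nu$ in $\mathcal W_\lambda$, $\mathcal W_\alpha$ respectively, $\delta_{\lambda\alpha}(\nu)=\alpha_\ell(\nu)-\lambda_\ell(\nu)$, and let $st_\lambda(\nu)$, $st_\alpha(\nu)$ be the colour (black or white) of $\nu$ in $\mathcal W_\lambda$, $\mathcal W_\alpha$. Then for every positive integer $\nu$: if $st_\lambda(\nu)=st_\alpha(\nu)$ then $\delta_{\lambda\alpha}(\nu+1)=\delta_{\lambda\alpha}(\nu)$; if $st_\lambda(\nu)$ is white and $st_\alpha(\nu)$ is black then $\delta_{\lambda\alpha}(\nu+1)=\delta_{\lambda\alpha}(\nu)-1$; if $st_\lambda(\nu)$ is black and $st_\alpha(\nu)$ is white then $\delta_{\lambda\alpha}(\nu+1)=\delta_{\lambda\alpha}(\nu)+1$.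
   Context: Fix $p\ge5$. White metallic tree under an assignment $\alpha$, $\mathcal W_\alpha$: nodes are the positive integers, each black or white; root $1$ is white; nodes are processed in increasing order and node $\nu$ receives $p-2$ sons if white and $p-3$ sons if black, namely the smallest integers not yet used, in increasing order; an assignment specifies for each node the position (leftmost = $1$) of its unique black son among its sons, other sons being white. The leftmost assignment $\lambda$ always puts the black son at position $1$. *)

theory Defs
  imports Main
begin

datatype colour = White | Black

definition nsons :: "nat \<Rightarrow> colour \<Rightarrow> nat" where
  "nsons p c = (if c = White then p - 2 else p - 3)"

text \<open>After processing nodes 1..n, wmt_gen p a n = (col, nxt) where col gives the colours
  of all nodes created so far (nodes not yet created default to White, which is their
  colour unless they are later chosen as a black son) and nxt is the smallest
  integer not yet used. The root 1 is White, the first unused integer is 2.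
  Processing node nu = Suc n: its sons are nxt, ..., nxt + nsons - 1, and the son
  at position a nu (leftmost = 1), namely nxt + a nu - 1, is black.\<close>
primrec wmt_gen :: "nat \<Rightarrow> (nat \<Rightarrow> nat) \<Rightarrow> nat \<Rightarrow> (nat \<Rightarrow> colour) \<times> nat" where
  "wmt_gen p a 0 = ((\<lambda>_. White), 2)"
| "wmt_gen p a (Suc n) =
     (let (col, nxt) = wmt_gen p a n;
          k = nsons p (col (Suc n))
      in (col(nxt + a (Suc n) - 1 := Black), nxt + k))"

definition wmt_colour :: "nat \<Rightarrow> (nat \<Rightarrow> nat) \<Rightarrow> nat \<Rightarrow> colour" where
  "wmt_colour p a nu = fst (wmt_gen p a nu) nu"

definition leftmost_son :: "nat \<Rightarrow> (nat \<Rightarrow> nat) \<Rightarrow> nat \<Rightarrow> nat" where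
  "leftmost_son p a nu = snd (wmt_gen p a (nu - 1))"

definition is_assignment :: "nat \<Rightarrow> (nat \<Rightarrow> nat) \<Rightarrow> bool" where
  "is_assignment p a \<longleftrightarrow>
     (\<forall>nu\<ge>1. 1 \<le> a nu \<and> a nu \<le> nsons p (wmt_colour p a nu))"

definition leftmost_assignment :: "nat \<Rightarrow> nat" where
  "leftmost_assignment = (\<lambda>_. 1)"

definition delta :: "nat \<Rightarrow> (nat \<Rightarrow> nat) \<Rightarrow> nat \<Rightarrow> int" where
  "delta p a nu = int (leftmost_son p a nu) - int (leftmost_son p leftmost_assignment nu)"

end

theory Submission
  imports Defs
begin

text \<open>The leftmost son of \<open>\<nu> + 1\<close> is the leftmost son of \<open>\<nu>\<close> shifted by the number of sons
  of \<open>\<nu>\<close>, which is \<open>p - 2\<close> or \<open>p - 3\<close> according to the colour of \<open>\<nu>\<close>. Hence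
  \<open>\<delta>(\<nu> + 1) - \<delta>(\<nu>)\<close> is the difference of the two sons counts, i.e. \<open>0\<close> or \<open>\<plusminus>1\<close>.
  The colour used here is the final one because the sons of \<open>\<nu>\<close> all lie beyond \<open>\<nu>\<close>,
  so processing \<open>\<nu>\<close> never recolours \<open>\<nu>\<close> itself.\<close>

lemma nsons_pos: "p \<ge> 4 \<Longrightarrow> nsons p c \<ge> 1"
  by (auto simp add: nsons_def)

lemma wmt_gen_Suc_next:
  "snd (wmt_gen p a (Suc n)) = snd (wmt_gen p a n) + nsons p (fst (wmt_gen p a n) (Suc n))"
  by (simp add: Let_def split: prod.splits)

lemma wmt_gen_next_ge:
  assumes "p \<ge> 4"
  shows "snd (wmt_gen p a n) \<ge> n + 2"
proof (induction n)
  case 0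
  then show ?case by simp
next
  case (Suc n)
  then show ?case
    using wmt_gen_Suc_next[of p a n] nsons_pos[OF assms, of "fst (wmt_gen p a n) (Suc n)"]
    by linarith
qed

lemma wmt_gen_Suc_colour_self:
  assumes "p \<ge> 4" and "a (Suc n) \<ge> 1"
  shows "fst (wmt_gen p a (Suc n)) (Suc n) = fst (wmt_gen p a n) (Suc n)"
proof -
  obtain col nxt where gen: "wmt_gen p a n = (col, nxt)"
    by fastforce
  have "nxt \<ge> n + 2"
    using wmt_gen_next_ge[OF assms(1), where a = a and n = n] gen by simp
  then show ?thesis
    using assms(2) gen by (auto simp add: Let_def)
qed

lemma leftmost_son_Suc:
  assumes "p \<ge> 4" and "a nu \<ge> 1" and "nu \<ge> 1"
  shows "leftmost_son p a (Suc nu) = leftmost_son p a nu + nsons p (wmt_colour p a nu)"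
proof -
  obtain m where nu: "nu = Suc m"
    using assms(3) by (cases nu) auto
  have "wmt_colour p a nu = fst (wmt_gen p a m) nu"
    unfolding wmt_colour_def nu using wmt_gen_Suc_colour_self[OF assms(1)] assms(2) nu by simp
  then show ?thesis
    unfolding leftmost_son_def nu using wmt_gen_Suc_next[of p a m] by (simp del: wmt_gen.simps)
qed

lemma delta_Suc:
  assumes "p \<ge> 4" and "a nu \<ge> 1" and "nu \<ge> 1"
  shows "delta p a (Suc nu) = delta p a nu + int (nsons p (wmt_colour p a nu))
           - int (nsons p (wmt_colour p leftmost_assignment nu))"
  using leftmost_son_Suc[of p a nu] leftmost_son_Suc[of p leftmost_assignment nu] assms
  by (simp add: delta_def leftmost_assignment_def)

theorem lemma7:
  fixes p :: nat and a :: "nat \<Rightarrow> nat" and nu :: nat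
  assumes "p \<ge> 5"
    and "is_assignment p a"
    and "nu \<ge> 1"
  shows "(wmt_colour p leftmost_assignment nu = wmt_colour p a nu
            \<longrightarrow> delta p a (nu + 1) = delta p a nu)
       \<and> (wmt_colour p leftmost_assignment nu = White \<and> wmt_colour p a nu = Black
            \<longrightarrow> delta p a (nu + 1) = delta p a nu - 1)
       \<and> (wmt_colour p leftmost_assignment nu = Black \<and> wmt_colour p a nu = White
            \<longrightarrow> delta p a (nu + 1) = delta p a nu + 1)"
proof -
  have "a nu \<ge> 1"
    using assms(2,3) unfolding is_assignment_def by blast
  then have "delta p a (nu + 1) = delta p a nu + int (nsons p (wmt_colour p a nu))
               - int (nsons p (wmt_colour p leftmost_assignment nu))"
    using delta_Suc[of p a nu] assms(1,3) by simp
  then show ?thesis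
    using assms(1)
    by (cases "wmt_colour p leftmost_assignment nu"; cases "wmt_colour p a nu")
       (auto simp: nsons_def)
qed

end
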